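(* If $\mathcal{I}$ is an ideal on $\mathbf{N}$, then $$c_0(\mathcal{I})\cap\ell_\infty=\Big\{x\in\ell_\infty:\int_{\mathbf{N}}|x|\,\mathrm{d}\mu=0\text{ for all }\mu\in\mathrm{M}(\mathcal{I})\Big\}.$$
   Context: An ideal on $\mathbf{N}$ is a family of subsets closed under subsets and finite unions, not containing $\mathbf{N}$, and containing all finite sets. $c_0(\mathcal{I})$ is the set of real sequences $x$ with $\{n:|x_n|\ge\varepsilon\}\in\mathcal{I}$ for every $\varepsilon>0$; $\ell_\infty$ is the space of bounded real sequences. $\mathrm{M}(\mathcal{I})$ is the set of finitely additive probability measures $\mu$ on $\mathcal{P}(\mathbf{N})$ with $\mu(A)=0$ for all $A\in\mathcal{I}$, and $\int_{\mathbf{N}}x\,\mathrm{d}\mu$ is the usual integral of a bounded sequence against a finitely additive measure. *)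

theory Defs
  imports "HOL-Analysis.Analysis"
begin

definition is_ideal :: "nat set set \<Rightarrow> bool" where
  "is_ideal I \<longleftrightarrow>
     (\<forall>A\<in>I. \<forall>B. B \<subseteq> A \<longrightarrow> B \<in> I) \<and>
     (\<forall>A\<in>I. \<forall>B\<in>I. A \<union> B \<in> I) \<and>
     UNIV \<notin> I \<and>
     (\<forall>A. finite A \<longrightarrow> A \<in> I)"

definition ell_inf :: "(nat \<Rightarrow> real) set" where
  "ell_inf = {x. \<exists>M. \<forall>n. \<bar>x n\<bar> \<le> M}"

definition c0 :: "nat set set \<Rightarrow> (nat \<Rightarrow> real) set" where
  "c0 I = {x. \<forall>\<epsilon>>0. {n. \<bar>x n\<bar> \<ge> \<epsilon>} \<in> I}"

definition fa_prob :: "(nat set \<Rightarrow> real) \<Rightarrow> bool" where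
  "fa_prob \<mu> \<longleftrightarrow>
     (\<forall>A. \<mu> A \<ge> 0) \<and> \<mu> UNIV = 1 \<and>
     (\<forall>A B. A \<inter> B = {} \<longrightarrow> \<mu> (A \<union> B) = \<mu> A + \<mu> B)"

definition M_ideal :: "nat set set \<Rightarrow> (nat set \<Rightarrow> real) set" where
  "M_ideal I = {\<mu>. fa_prob \<mu> \<and> (\<forall>A\<in>I. \<mu> A = 0)}"

definition fin_partition :: "nat set set \<Rightarrow> bool" where
  "fin_partition P \<longleftrightarrow> finite P \<and> \<Union>P = UNIV \<and> {} \<notin> P \<and>
     (\<forall>A\<in>P. \<forall>B\<in>P. A \<noteq> B \<longrightarrow> A \<inter> B = {})"

text \<open>Integral of a bounded sequence against a finitely additive measure,
  defined as the supremum of lower Darboux sums over finite partitions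
  (for bounded functions this coincides with the usual integral).\<close>
definition fa_integral :: "(nat \<Rightarrow> real) \<Rightarrow> (nat set \<Rightarrow> real) \<Rightarrow> real" where
  "fa_integral x \<mu> =
     Sup {(\<Sum>A\<in>P. \<mu> A * (INF n\<in>A. x n)) | P. fin_partition P}"

end

theory Submission
  imports Defs
begin

text \<open>If every \<open>|x|\<ge>\<epsilon>\<close> set lies in \<open>I\<close>, every block of positive \<open>\<mu>\<close>-measure contains a point
  with \<open>|x| < \<epsilon>\<close>, so every lower sum, hence the integral, is at most \<open>\<epsilon>\<close>. Conversely, if
  \<open>E = {|x| \<ge> \<epsilon>}\<close> is not in \<open>I\<close>, extend \<open>I\<close> by Zorn's lemma to a maximal ideal \<open>J\<close> avoiding
  \<open>E\<close>; it is prime, so \<open>\<mu>(A) = 0\<close> for \<open>A\<in>J\<close> and \<open>1\<close> otherwise is a measure in \<open>M(I)\<close> with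
  \<open>\<mu>(E) = 1\<close>, and then \<open>\<integral>|x| d\<mu> \<ge> \<epsilon>\<close>.\<close>

lemma fa_prob_empty:
  assumes "fa_prob \<mu>"
  shows "\<mu> {} = 0"
proof -
  have "\<mu> ({} \<union> {}) = \<mu> {} + \<mu> {}" using assms unfolding fa_prob_def by blast
  then show ?thesis by simp
qed

lemma fa_prob_mono:
  assumes "fa_prob \<mu>" "A \<subseteq> B"
  shows "\<mu> A \<le> \<mu> B"
proof -
  have "\<mu> B = \<mu> (A \<union> (B - A))" using assms(2) by (simp add: Un_absorb1)
  also have "\<dots> = \<mu> A + \<mu> (B - A)" using assms(1) unfolding fa_prob_def by blast
  finally show ?thesis using assms(1) unfolding fa_prob_def by (metis le_add_same_cancel1)
qed

lemma fa_prob_sum_disjoint_family: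
  assumes "fa_prob \<mu>" "finite P" "\<forall>A\<in>P. \<forall>B\<in>P. A \<noteq> B \<longrightarrow> A \<inter> B = {}"
  shows "sum \<mu> P = \<mu> (\<Union>P)"
  using assms(2,3)
proof (induction P rule: finite_induct)
  case empty
  then show ?case using fa_prob_empty[OF assms(1)] by simp
next
  case (insert A P)
  have "A \<inter> B = {}" if "B \<in> P" for B
    using insert.hyps(2) insert.prems that by (metis insertCI)
  then have "A \<inter> \<Union>P = {}" by blast
  then have "\<mu> (A \<union> \<Union>P) = \<mu> A + \<mu> (\<Union>P)" using assms(1) unfolding fa_prob_def by blast
  moreover have "sum \<mu> P = \<mu> (\<Union>P)" using insert.prems by (intro insert.IH) blast
  ultimately show ?case using insert.hyps by simp
qed

lemma fa_prob_sum_partition: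
  assumes "fa_prob \<mu>" "fin_partition P"
  shows "sum \<mu> P = 1"
proof -
  have "sum \<mu> P = \<mu> (\<Union>P)"
    using assms(2) unfolding fin_partition_def by (intro fa_prob_sum_disjoint_family[OF assms(1)]) auto
  also have "\<dots> = 1" using assms unfolding fin_partition_def fa_prob_def by simp
  finally show ?thesis .
qed

definition lower_sum :: "(nat \<Rightarrow> real) \<Rightarrow> (nat set \<Rightarrow> real) \<Rightarrow> nat set set \<Rightarrow> real" where
  "lower_sum x \<mu> P = (\<Sum>A\<in>P. \<mu> A * (INF n\<in>A. x n))"

lemma fa_integral_lower_sum: "fa_integral x \<mu> = Sup (lower_sum x \<mu> ` Collect fin_partition)"
  unfolding fa_integral_def lower_sum_def by (rule arg_cong[where f = Sup]) auto

lemma fin_partition_UNIV: "fin_partition {UNIV}"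
  unfolding fin_partition_def by auto

lemma fin_partition_set_compl: "fin_partition ({E, -E} - {{}})"
  unfolding fin_partition_def by auto

lemma lower_sum_le:
  assumes "fa_prob \<mu>" "fin_partition P" "bdd_below (range x)"
    and small: "\<And>A. \<mu> A \<noteq> 0 \<Longrightarrow> \<exists>n\<in>A. x n \<le> c"
  shows "lower_sum x \<mu> P \<le> c"
proof -
  have "\<mu> A * (INF n\<in>A. x n) \<le> \<mu> A * c" for A
  proof (cases "\<mu> A = 0")
    case False
    then obtain n where "n \<in> A" "x n \<le> c" using small by blast
    moreover have "bdd_below (x ` A)" using assms(3) by (rule bdd_below_mono) auto
    ultimately have "(INF n\<in>A. x n) \<le> c" by (intro cINF_lower2)
    then show ?thesis using assms(1) unfolding fa_prob_def by (simp add: mult_left_mono)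
  qed simp
  then have "lower_sum x \<mu> P \<le> (\<Sum>A\<in>P. \<mu> A * c)"
    unfolding lower_sum_def by (rule sum_mono)
  also have "\<dots> = sum \<mu> P * c" by (simp add: sum_distrib_right)
  also have "\<dots> = c" using fa_prob_sum_partition[OF assms(1,2)] by simp
  finally show ?thesis .
qed

lemma fa_integral_le:
  assumes "fa_prob \<mu>" "bdd_below (range x)" "\<And>A. \<mu> A \<noteq> 0 \<Longrightarrow> \<exists>n\<in>A. x n \<le> c"
  shows "fa_integral x \<mu> \<le> c"
  unfolding fa_integral_lower_sum
proof (rule cSup_least)
  show "lower_sum x \<mu> ` Collect fin_partition \<noteq> {}" using fin_partition_UNIV by blast
qed (auto intro: lower_sum_le[OF assms(1) _ assms(2,3)])

lemma lower_sum_le_fa_integral: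
  assumes "fa_prob \<mu>" "bdd_below (range x)" "bdd_above (range x)" "fin_partition P"
  shows "lower_sum x \<mu> P \<le> fa_integral x \<mu>"
proof -
  obtain M where "\<And>n. x n \<le> M" using assms(3) by (auto simp: bdd_above_def)
  moreover have "A \<noteq> {}" if "\<mu> A \<noteq> 0" for A using that fa_prob_empty[OF assms(1)] by blast
  ultimately have "bdd_above (lower_sum x \<mu> ` Collect fin_partition)"
    using lower_sum_le[OF assms(1) _ assms(2)] by (intro bdd_aboveI[of _ M]) blast
  then show ?thesis unfolding fa_integral_lower_sum using assms(4) by (auto intro: cSup_upper)
qed

lemma fa_integral_ge_measure:
  assumes "fa_prob \<mu>" "bdd_above (range x)" "\<And>n. 0 \<le> x n" "\<And>n. n \<in> E \<Longrightarrow> c \<le> x n"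
  shows "\<mu> E * c \<le> fa_integral x \<mu>"
proof -
  define P where "P = {E, -E} - {{}}"
  have below: "bdd_below (range x)" using assms(3) by (auto intro!: bdd_belowI[of _ 0])
  have terms_nonneg: "0 \<le> \<mu> A * (INF n\<in>A. x n)" if "A \<noteq> {}" for A
    using assms(1,3) that unfolding fa_prob_def by (intro mult_nonneg_nonneg cINF_greatest) auto
  have "\<mu> E * c \<le> lower_sum x \<mu> P"
  proof (cases "E = {}")
    case True
    then show ?thesis using fa_prob_empty[OF assms(1)] terms_nonneg
      unfolding lower_sum_def P_def by (auto intro!: sum_nonneg)
  next
    case False
    then have "\<mu> E * c \<le> \<mu> E * (INF n\<in>E. x n)"
      using assms(1,4) unfolding fa_prob_def by (auto intro!: mult_left_mono cINF_greatest)
    also have "\<dots> \<le> lower_sum x \<mu> P"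
      unfolding lower_sum_def P_def using False terms_nonneg by (intro member_le_sum) auto
    finally show ?thesis .
  qed
  also have "\<dots> \<le> fa_integral x \<mu>"
    using lower_sum_le_fa_integral[OF assms(1) below assms(2)] fin_partition_set_compl
    unfolding P_def by blast
  finally show ?thesis .
qed

lemma is_idealI:
  assumes "\<And>A B. A \<in> I \<Longrightarrow> B \<subseteq> A \<Longrightarrow> B \<in> I" "\<And>A B. A \<in> I \<Longrightarrow> B \<in> I \<Longrightarrow> A \<union> B \<in> I"
    "UNIV \<notin> I" "\<And>A. finite A \<Longrightarrow> A \<in> I"
  shows "is_ideal I"
  using assms unfolding is_ideal_def by blast

lemma is_ideal_subset: "is_ideal I \<Longrightarrow> A \<in> I \<Longrightarrow> B \<subseteq> A \<Longrightarrow> B \<in> I"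
  and is_ideal_Un: "is_ideal I \<Longrightarrow> A \<in> I \<Longrightarrow> B \<in> I \<Longrightarrow> A \<union> B \<in> I"
  and is_ideal_UNIV: "is_ideal I \<Longrightarrow> UNIV \<notin> I"
  and is_ideal_finite: "is_ideal I \<Longrightarrow> finite A \<Longrightarrow> A \<in> I"
  unfolding is_ideal_def by blast+

lemma is_ideal_Union_chain:
  assumes "C \<noteq> {}" "chain\<^sub>\<subseteq> C" "\<And>J. J \<in> C \<Longrightarrow> is_ideal J"
  shows "is_ideal (\<Union>C)"
proof (rule is_idealI)
  fix A B assume "A \<in> \<Union>C" "B \<in> \<Union>C"
  then obtain J K where "A \<in> J" "B \<in> K" "J \<in> C" "K \<in> C" by blast
  moreover have "J \<subseteq> K \<or> K \<subseteq> J" using assms(2) \<open>J \<in> C\<close> \<open>K \<in> C\<close> unfolding chain_subset_def by blast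
  ultimately show "A \<union> B \<in> \<Union>C" using assms(3) is_ideal_Un by (metis UnionI subsetD)
next
  obtain J where "J \<in> C" using assms(1) by blast
  then show "A \<in> \<Union>C" if "finite A" for A using that assms(3) is_ideal_finite by blast
qed (use assms(3) is_ideal_subset is_ideal_UNIV in blast)+

lemma is_ideal_adjoin:
  assumes "is_ideal J" "\<forall>C\<in>J. A \<union> C \<noteq> UNIV"
  shows "is_ideal {B. \<exists>C\<in>J. B \<subseteq> A \<union> C}"
proof (rule is_idealI)
  fix B1 B2 assume "B1 \<in> {B. \<exists>C\<in>J. B \<subseteq> A \<union> C}" "B2 \<in> {B. \<exists>C\<in>J. B \<subseteq> A \<union> C}"
  then obtain C1 C2 where "C1 \<in> J" "C2 \<in> J" "B1 \<subseteq> A \<union> C1" "B2 \<subseteq> A \<union> C2" by blast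
  then show "B1 \<union> B2 \<in> {B. \<exists>C\<in>J. B \<subseteq> A \<union> C}" using is_ideal_Un[OF assms(1)] by blast
next
  show "UNIV \<notin> {B. \<exists>C\<in>J. B \<subseteq> A \<union> C}" using assms(2) by blast
next
  show "B \<in> {B. \<exists>C\<in>J. B \<subseteq> A \<union> C}" if "finite B" for B
    using that is_ideal_finite[OF assms(1)] by blast
qed blast

lemma prime_ideal_extension:
  assumes "is_ideal I" "E \<notin> I"
  obtains J where "is_ideal J" "I \<subseteq> J" "E \<notin> J" "\<And>A. A \<in> J \<or> -A \<in> J"
proof -
  define Z where "Z = {J. is_ideal J \<and> I \<subseteq> J \<and> E \<notin> J}"
  have chain_bound: "\<exists>U\<in>Z. \<forall>X\<in>C. X \<subseteq> U" if "C \<in> chains Z" for C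
  proof (cases "C = {}")
    case True
    then show ?thesis using assms unfolding Z_def by blast
  next
    case False
    have "is_ideal (\<Union>C)"
      using is_ideal_Union_chain[OF False] that chainsD2[OF that] unfolding chains_def Z_def by blast
    moreover obtain J where "J \<in> C" using False by blast
    ultimately have "\<Union>C \<in> Z" using chainsD2[OF that] unfolding Z_def by blast
    then show ?thesis by blast
  qed
  have "\<exists>J\<in>Z. \<forall>K\<in>Z. J \<subseteq> K \<longrightarrow> K = J"
    using chain_bound by (intro Zorn_Lemma2) blast
  then obtain J where J: "J \<in> Z" and max: "\<forall>K\<in>Z. J \<subseteq> K \<longrightarrow> K = J" by blast
  have ideal: "is_ideal J" and IJ: "I \<subseteq> J" and EJ: "E \<notin> J" using J unfolding Z_def by auto
  have cover: "\<exists>C\<in>J. E \<subseteq> A \<union> C" if "A \<notin> J" for A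
  proof (rule ccontr)
    assume uncovered: "\<not> ?thesis"
    define K where "K = {B. \<exists>C\<in>J. B \<subseteq> A \<union> C}"
    have "is_ideal K" unfolding K_def using uncovered by (intro is_ideal_adjoin[OF ideal]) auto
    moreover have "J \<subseteq> K" "E \<notin> K" using uncovered unfolding K_def by auto
    ultimately have "K = J" using max IJ unfolding Z_def by blast
    moreover have "A \<in> K" using is_ideal_finite[OF ideal] unfolding K_def by blast
    ultimately show False using that by simp
  qed
  have "A \<in> J \<or> -A \<in> J" for A
  proof (rule ccontr)
    assume "\<not> ?thesis"
    then obtain C1 C2 where "C1 \<in> J" "C2 \<in> J" "E \<subseteq> A \<union> C1" "E \<subseteq> -A \<union> C2"
      using cover by meson
    then have "E \<subseteq> C1 \<union> C2" "C1 \<union> C2 \<in> J" using is_ideal_Un[OF ideal] by blast+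
    then show False using EJ is_ideal_subset[OF ideal] by blast
  qed
  then show ?thesis using that ideal IJ EJ by blast
qed

lemma fa_prob_prime_ideal_indicator:
  assumes "is_ideal J" "\<And>A. A \<in> J \<or> -A \<in> J"
  shows "fa_prob (\<lambda>A. if A \<in> J then 0 else 1)"
proof -
  have "A \<union> B \<in> J \<longleftrightarrow> A \<in> J \<and> B \<in> J" for A B
    using is_ideal_Un[OF assms(1)] is_ideal_subset[OF assms(1)] by blast
  moreover have "A \<in> J \<or> B \<in> J" if "A \<inter> B = {}" for A B
    using that assms(2)[of A] is_ideal_subset[OF assms(1), of "-A" B] by blast
  ultimately show ?thesis using is_ideal_UNIV[OF assms(1)] unfolding fa_prob_def by auto
qed

lemma M_ideal_full_on_non_member:
  assumes "is_ideal I" "E \<notin> I"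
  obtains \<mu> where "\<mu> \<in> M_ideal I" "\<mu> E = 1"
proof -
  obtain J where "is_ideal J" "I \<subseteq> J" "E \<notin> J" "\<And>A. A \<in> J \<or> -A \<in> J"
    using prime_ideal_extension[OF assms] by blast
  then have "(\<lambda>A. if A \<in> J then 0 else 1::real) \<in> M_ideal I"
    using fa_prob_prime_ideal_indicator unfolding M_ideal_def by auto
  then show ?thesis using that \<open>E \<notin> J\<close> by auto
qed

lemma fa_integral_abs_eq_0_if_c0:
  assumes "x \<in> c0 I" "x \<in> ell_inf" "\<mu> \<in> M_ideal I"
  shows "fa_integral (\<lambda>n. \<bar>x n\<bar>) \<mu> = 0"
proof -
  have prob: "fa_prob \<mu>" and null: "\<And>A. A \<in> I \<Longrightarrow> \<mu> A = 0"
    using assms(3) unfolding M_ideal_def by auto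
  have above: "bdd_above (range (\<lambda>n. \<bar>x n\<bar>))" using assms(2) unfolding ell_inf_def by auto
  have below: "bdd_below (range (\<lambda>n. \<bar>x n\<bar>))" by (auto intro!: bdd_belowI[of _ 0])
  have "fa_integral (\<lambda>n. \<bar>x n\<bar>) \<mu> \<le> 0 + \<epsilon>" if "\<epsilon> > 0" for \<epsilon>
  proof -
    have "\<exists>n\<in>A. \<bar>x n\<bar> \<le> \<epsilon>" if "\<mu> A \<noteq> 0" for A
    proof (rule ccontr)
      assume "\<not> (\<exists>n\<in>A. \<bar>x n\<bar> \<le> \<epsilon>)"
      then have "A \<subseteq> {n. \<epsilon> \<le> \<bar>x n\<bar>}" by auto
      then have "\<mu> A \<le> \<mu> {n. \<epsilon> \<le> \<bar>x n\<bar>}" by (rule fa_prob_mono[OF prob])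
      moreover have "{n. \<epsilon> \<le> \<bar>x n\<bar>} \<in> I" using assms(1) \<open>\<epsilon> > 0\<close> unfolding c0_def by blast
      ultimately show False using \<open>\<mu> A \<noteq> 0\<close> null prob unfolding fa_prob_def
        by (metis order.antisym)
    qed
    then show ?thesis using fa_integral_le[OF prob below, of \<epsilon>] by simp
  qed
  then have "fa_integral (\<lambda>n. \<bar>x n\<bar>) \<mu> \<le> 0" by (rule field_le_epsilon)
  moreover have "0 \<le> fa_integral (\<lambda>n. \<bar>x n\<bar>) \<mu>"
    using fa_integral_ge_measure[OF prob above, of UNIV 0] by simp
  ultimately show ?thesis by simp
qed

lemma c0_if_fa_integral_abs_eq_0:
  assumes "is_ideal I" "x \<in> ell_inf" "\<And>\<mu>. \<mu> \<in> M_ideal I \<Longrightarrow> fa_integral (\<lambda>n. \<bar>x n\<bar>) \<mu> = 0"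
  shows "x \<in> c0 I"
  unfolding c0_def
proof (intro CollectI allI impI)
  fix \<epsilon> :: real
  assume "\<epsilon> > 0"
  show "{n. \<epsilon> \<le> \<bar>x n\<bar>} \<in> I"
  proof (rule ccontr)
    assume "{n. \<epsilon> \<le> \<bar>x n\<bar>} \<notin> I"
    then obtain \<mu> where \<mu>: "\<mu> \<in> M_ideal I" "\<mu> {n. \<epsilon> \<le> \<bar>x n\<bar>} = 1"
      using M_ideal_full_on_non_member[OF assms(1)] by blast
    have "fa_prob \<mu>" using \<mu>(1) unfolding M_ideal_def by simp
    moreover have "bdd_above (range (\<lambda>n. \<bar>x n\<bar>))" using assms(2) unfolding ell_inf_def by auto
    ultimately have "\<mu> {n. \<epsilon> \<le> \<bar>x n\<bar>} * \<epsilon> \<le> fa_integral (\<lambda>n. \<bar>x n\<bar>) \<mu>"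
      by (rule fa_integral_ge_measure) auto
    then show False using \<mu> assms(3) \<open>\<epsilon> > 0\<close> by simp
  qed
qed

theorem proposition3p3:
  fixes I :: "nat set set"
  assumes "is_ideal I"
  shows "c0 I \<inter> ell_inf =
    {x \<in> ell_inf. \<forall>\<mu>\<in>M_ideal I. fa_integral (\<lambda>n. \<bar>x n\<bar>) \<mu> = 0}"
proof (intro equalityI subsetI)
  fix x assume "x \<in> c0 I \<inter> ell_inf"
  then show "x \<in> {x \<in> ell_inf. \<forall>\<mu>\<in>M_ideal I. fa_integral (\<lambda>n. \<bar>x n\<bar>) \<mu> = 0}"
    using fa_integral_abs_eq_0_if_c0 by blast
next
  fix x assume "x \<in> {x \<in> ell_inf. \<forall>\<mu>\<in>M_ideal I. fa_integral (\<lambda>n. \<bar>x n\<bar>) \<mu> = 0}"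
  then show "x \<in> c0 I \<inter> ell_inf" using c0_if_fa_integral_abs_eq_0[OF assms] by blast
qed

end
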